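(* Let $1<w\le 2$, $h>1$, $k\ge 2$, and let $\frac12\le y_1<\dots<y_n\le h-\frac12$ be uniformly spaced with $y_{i+1}-y_i=\frac1k$ for all $i$. Let $(\mathbf x,\prec)$ be a $\frac1k$-reasonable layout of this instance. If $1<i<n$ and both $s_{i-1}$ and $s_{i+1}$ are in front of $s_i$, then $s_i$ is a standard bad square.
   Context: The instance is the strip $T=[0,w]\times[0,h]$ with the given $y_i$. A layout is a pair $(\mathbf x,\prec)$ where $\mathbf x=(x_1,\dots,x_n)$ with $x_i\in[\frac12,w-\frac12]$, and $\prec$ is a total order on the squares $s_1,\dots,s_n$, where $s_i$ is the closed axis-parallel unit square with centre $(x_i,y_i)$. If $s_i\prec s_j$ we say $s_j$ is in front of $s_i$ and $s_i$ is behind $s_j$. A point $p$ on the boundary of $s_i$ is visible if every square $s_j$ ($j\neq i$) containing $p$ is behind $s_i$, and covered otherwise. The visible perimeter of $s_i$ is the total length of its visible boundary points; the gap of $s_i$ is its visible perimeter minus $2$, the gap of a layout is the minimum gap of its squares, and a layout is $\varepsilon$-reasonable if its gap is larger than $\varepsilon$. A bad square is a square with at least two of its four corners covered; a standard bad square is a bad square one of whose vertical sides is entirely covered. *)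

theory Defs
  imports "HOL-Analysis.Analysis"
begin

text \<open>Squares are indexed by 1..n; centre of square i is (x i, y i).
  The total order on squares is a strict relation prec on {1..n}:
  prec i j means s_i is behind s_j (s_j in front of s_i).\<close>

definition sq :: "real \<Rightarrow> real \<Rightarrow> (real \<times> real) set" where
  "sq a b = {a - 1/2 .. a + 1/2} \<times> {b - 1/2 .. b + 1/2}"

definition strict_total_on :: "nat set \<Rightarrow> (nat \<Rightarrow> nat \<Rightarrow> bool) \<Rightarrow> bool" where
  "strict_total_on S r \<longleftrightarrow>
     (\<forall>i\<in>S. \<not> r i i) \<and>
     (\<forall>i\<in>S. \<forall>j\<in>S. \<forall>l\<in>S. r i j \<longrightarrow> r j l \<longrightarrow> r i l) \<and>
     (\<forall>i\<in>S. \<forall>j\<in>S. i \<noteq> j \<longrightarrow> r i j \<or> r j i)"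

definition is_layout :: "real \<Rightarrow> nat \<Rightarrow> (nat \<Rightarrow> real) \<Rightarrow> (nat \<Rightarrow> nat \<Rightarrow> bool) \<Rightarrow> bool" where
  "is_layout w n x prec \<longleftrightarrow>
     (\<forall>i\<in>{1..n}. 1/2 \<le> x i \<and> x i \<le> w - 1/2) \<and> strict_total_on {1..n} prec"

definition covered :: "nat \<Rightarrow> (nat \<Rightarrow> real) \<Rightarrow> (nat \<Rightarrow> real) \<Rightarrow> (nat \<Rightarrow> nat \<Rightarrow> bool)
                        \<Rightarrow> nat \<Rightarrow> real \<times> real \<Rightarrow> bool" where
  "covered n x y prec i p \<longleftrightarrow>
     (\<exists>j\<in>{1..n}. j \<noteq> i \<and> p \<in> sq (x j) (y j) \<and> \<not> prec j i)"

text \<open>Visible perimeter: total length of visible boundary points, computed side by side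
  (the four sides meet only in the corners, a null set).\<close>
definition vis_perim :: "nat \<Rightarrow> (nat \<Rightarrow> real) \<Rightarrow> (nat \<Rightarrow> real) \<Rightarrow> (nat \<Rightarrow> nat \<Rightarrow> bool)
                          \<Rightarrow> nat \<Rightarrow> real" where
  "vis_perim n x y prec i =
      measure lborel {t \<in> {-1/2..1/2}. \<not> covered n x y prec i (x i + t, y i - 1/2)}
    + measure lborel {t \<in> {-1/2..1/2}. \<not> covered n x y prec i (x i + t, y i + 1/2)}
    + measure lborel {t \<in> {-1/2..1/2}. \<not> covered n x y prec i (x i - 1/2, y i + t)}
    + measure lborel {t \<in> {-1/2..1/2}. \<not> covered n x y prec i (x i + 1/2, y i + t)}"

definition sq_gap :: "nat \<Rightarrow> (nat \<Rightarrow> real) \<Rightarrow> (nat \<Rightarrow> real) \<Rightarrow> (nat \<Rightarrow> nat \<Rightarrow> bool)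
                       \<Rightarrow> nat \<Rightarrow> real" where
  "sq_gap n x y prec i = vis_perim n x y prec i - 2"

definition layout_gap :: "nat \<Rightarrow> (nat \<Rightarrow> real) \<Rightarrow> (nat \<Rightarrow> real) \<Rightarrow> (nat \<Rightarrow> nat \<Rightarrow> bool) \<Rightarrow> real" where
  "layout_gap n x y prec = Min ((\<lambda>i. sq_gap n x y prec i) ` {1..n})"

definition reasonable :: "real \<Rightarrow> nat \<Rightarrow> (nat \<Rightarrow> real) \<Rightarrow> (nat \<Rightarrow> real) \<Rightarrow> (nat \<Rightarrow> nat \<Rightarrow> bool) \<Rightarrow> bool" where
  "reasonable eps n x y prec \<longleftrightarrow> layout_gap n x y prec > eps"

definition corners :: "real \<Rightarrow> real \<Rightarrow> (real \<times> real) set" where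
  "corners a b = {(a - 1/2, b - 1/2), (a - 1/2, b + 1/2), (a + 1/2, b - 1/2), (a + 1/2, b + 1/2)}"

definition bad_square :: "nat \<Rightarrow> (nat \<Rightarrow> real) \<Rightarrow> (nat \<Rightarrow> real) \<Rightarrow> (nat \<Rightarrow> nat \<Rightarrow> bool) \<Rightarrow> nat \<Rightarrow> bool" where
  "bad_square n x y prec i \<longleftrightarrow>
     card {c \<in> corners (x i) (y i). covered n x y prec i c} \<ge> 2"

definition standard_bad_square :: "nat \<Rightarrow> (nat \<Rightarrow> real) \<Rightarrow> (nat \<Rightarrow> real) \<Rightarrow> (nat \<Rightarrow> nat \<Rightarrow> bool) \<Rightarrow> nat \<Rightarrow> bool" where
  "standard_bad_square n x y prec i \<longleftrightarrow>
     bad_square n x y prec i \<and>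
     ((\<forall>t\<in>{y i - 1/2 .. y i + 1/2}. covered n x y prec i (x i - 1/2, t)) \<or>
      (\<forall>t\<in>{y i - 1/2 .. y i + 1/2}. covered n x y prec i (x i + 1/2, t)))"

end

theory Submission
  imports Defs
begin

text \<open>Since \<open>w \<le> 2\<close>, the three centres \<open>x (i - 1)\<close>, \<open>x i\<close>, \<open>x (i + 1)\<close> lie in an
  interval of length 1, and the neighbours, which are shifted vertically by \<open>\<plusminus>1/k\<close>, cover
  most of the bottom and top sides of \<open>s\<^sub>i\<close>. If \<open>x i\<close> lies strictly between the other two
  centres, the visible parts of bottom and top add up to at most \<open>\<bar>x (i - 1) - x (i + 1)\<bar> \<le> 1\<close>
  and each vertical side is visible on length at most \<open>1/k\<close>, so the gap is at most \<open>1/k\<close>,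
  contradicting reasonableness. Otherwise both neighbours lie on the same side of \<open>s\<^sub>i\<close>
  and together cover the whole vertical side facing them.\<close>

lemma measure_lborel_le_of_subset_Icc:
  fixes A :: "real set"
  assumes "A \<subseteq> {a..b}" "a \<le> b"
  shows "measure lborel A \<le> b - a"
proof -
  have "emeasure lborel A \<le> emeasure lborel {a..b}"
    using assms by (intro emeasure_mono) auto
  then have "enn2real (emeasure lborel A) \<le> enn2real (emeasure lborel {a..b})"
    using assms by (intro enn2real_mono) auto
  then show ?thesis
    using assms by (simp add: measure_def)
qed

lemma measure_not_holds_le_of_holds_on_prefix:
  assumes "v \<le> 1/2" "\<forall>t\<in>{-1/2..v}. P t"
  shows "measure lborel {t \<in> {-1/2..1/2}. \<not> P t} \<le> 1/2 - v"
proof -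
  have "{t \<in> {-1/2..1/2}. \<not> P t} \<subseteq> {v..1/2}"
    using assms(2) by force
  from measure_lborel_le_of_subset_Icc[OF this assms(1)] show ?thesis .
qed

lemma measure_not_holds_le_of_holds_on_suffix:
  assumes "-1/2 \<le> u" "\<forall>t\<in>{u..1/2}. P t"
  shows "measure lborel {t \<in> {-1/2..1/2}. \<not> P t} \<le> u + 1/2"
proof -
  have "{t \<in> {-1/2..1/2}. \<not> P t} \<subseteq> {-1/2..u}"
    using assms(2) by force
  from measure_lborel_le_of_subset_Icc[OF this assms(1)] show ?thesis by simp
qed

text \<open>\<open>cov\<close> marks the covered boundary points of the unit square centred at \<open>(b, yc)\<close>.\<close>

locale sandwiched_square =
  fixes cov :: "real \<times> real \<Rightarrow> bool" and a b c yc e :: real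
  assumes cov_below: "\<And>p. p \<in> sq a (yc - e) \<Longrightarrow> cov p"
    and cov_above: "\<And>p. p \<in> sq c (yc + e) \<Longrightarrow> cov p"
    and e_nonneg: "0 \<le> e" and e_le: "e \<le> 1/2"
    and dist_ab: "\<bar>a - b\<bar> \<le> 1" and dist_cb: "\<bar>c - b\<bar> \<le> 1" and dist_ac: "\<bar>a - c\<bar> \<le> 1"
begin

lemma left_side_covered:
  assumes "a \<le> b" "c \<le> b"
  shows "\<forall>t\<in>{yc - 1/2..yc + 1/2}. cov (b - 1/2, t)"
proof
  fix t assume t: "t \<in> {yc - 1/2..yc + 1/2}"
  show "cov (b - 1/2, t)"
  proof (cases "t \<le> yc - e + 1/2")
    case True
    then show ?thesis
      using t assms dist_ab e_nonneg by (intro cov_below) (auto simp: sq_def)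
  next
    case False
    then show ?thesis
      using t assms dist_cb e_le by (intro cov_above) (auto simp: sq_def)
  qed
qed

lemma right_side_covered:
  assumes "b \<le> a" "b \<le> c"
  shows "\<forall>t\<in>{yc - 1/2..yc + 1/2}. cov (b + 1/2, t)"
proof
  fix t assume t: "t \<in> {yc - 1/2..yc + 1/2}"
  show "cov (b + 1/2, t)"
  proof (cases "t \<le> yc - e + 1/2")
    case True
    then show ?thesis
      using t assms dist_ab e_nonneg by (intro cov_below) (auto simp: sq_def)
  next
    case False
    then show ?thesis
      using t assms dist_cb e_le by (intro cov_above) (auto simp: sq_def)
  qed
qed

lemma bottom_uncovered_le: "measure lborel {t \<in> {-1/2..1/2}. \<not> cov (b + t, yc - 1/2)} \<le> \<bar>b - a\<bar>"
proof (cases "a \<le> b")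
  case True
  have "\<forall>t\<in>{-1/2..1/2 - (b - a)}. cov (b + t, yc - 1/2)"
    using True e_nonneg e_le by (auto intro!: cov_below simp: sq_def)
  from measure_not_holds_le_of_holds_on_prefix[OF _ this] True show ?thesis by simp
next
  case False
  have "\<forall>t\<in>{a - b - 1/2..1/2}. cov (b + t, yc - 1/2)"
    using False e_nonneg e_le by (auto intro!: cov_below simp: sq_def)
  from measure_not_holds_le_of_holds_on_suffix[OF _ this] False show ?thesis by simp
qed

lemma top_uncovered_le: "measure lborel {t \<in> {-1/2..1/2}. \<not> cov (b + t, yc + 1/2)} \<le> \<bar>b - c\<bar>"
proof (cases "c \<le> b")
  case True
  have "\<forall>t\<in>{-1/2..1/2 - (b - c)}. cov (b + t, yc + 1/2)"
    using True e_nonneg e_le by (auto intro!: cov_above simp: sq_def)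
  from measure_not_holds_le_of_holds_on_prefix[OF _ this] True show ?thesis by simp
next
  case False
  have "\<forall>t\<in>{c - b - 1/2..1/2}. cov (b + t, yc + 1/2)"
    using False e_nonneg e_le by (auto intro!: cov_above simp: sq_def)
  from measure_not_holds_le_of_holds_on_suffix[OF _ this] False show ?thesis by simp
qed

lemma left_uncovered_le:
  assumes "a \<le> b \<or> c \<le> b"
  shows "measure lborel {t \<in> {-1/2..1/2}. \<not> cov (b - 1/2, yc + t)} \<le> e"
  using assms
proof
  assume "a \<le> b"
  then have "\<forall>t\<in>{-1/2..1/2 - e}. cov (b - 1/2, yc + t)"
    using dist_ab e_nonneg by (auto intro!: cov_below simp: sq_def)
  from measure_not_holds_le_of_holds_on_prefix[OF _ this] e_nonneg show ?thesis by simp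
next
  assume "c \<le> b"
  then have "\<forall>t\<in>{e - 1/2..1/2}. cov (b - 1/2, yc + t)"
    using dist_cb e_nonneg by (auto intro!: cov_above simp: sq_def)
  from measure_not_holds_le_of_holds_on_suffix[OF _ this] e_nonneg show ?thesis by simp
qed

lemma right_uncovered_le:
  assumes "b \<le> a \<or> b \<le> c"
  shows "measure lborel {t \<in> {-1/2..1/2}. \<not> cov (b + 1/2, yc + t)} \<le> e"
  using assms
proof
  assume "b \<le> a"
  then have "\<forall>t\<in>{-1/2..1/2 - e}. cov (b + 1/2, yc + t)"
    using dist_ab e_nonneg by (auto intro!: cov_below simp: sq_def)
  from measure_not_holds_le_of_holds_on_prefix[OF _ this] e_nonneg show ?thesis by simp
next
  assume "b \<le> c"
  then have "\<forall>t\<in>{e - 1/2..1/2}. cov (b + 1/2, yc + t)"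
    using dist_cb e_nonneg by (auto intro!: cov_above simp: sq_def)
  from measure_not_holds_le_of_holds_on_suffix[OF _ this] e_nonneg show ?thesis by simp
qed

lemma visible_perimeter_le_of_between:
  assumes "min a c \<le> b" "b \<le> max a c"
  shows "measure lborel {t \<in> {-1/2..1/2}. \<not> cov (b + t, yc - 1/2)}
       + measure lborel {t \<in> {-1/2..1/2}. \<not> cov (b + t, yc + 1/2)}
       + measure lborel {t \<in> {-1/2..1/2}. \<not> cov (b - 1/2, yc + t)}
       + measure lborel {t \<in> {-1/2..1/2}. \<not> cov (b + 1/2, yc + t)} \<le> 1 + 2 * e"
proof -
  have "\<bar>b - a\<bar> + \<bar>b - c\<bar> \<le> 1"
    using assms dist_ac by (cases "a \<le> c") (simp_all add: min_def max_def)
  moreover have "a \<le> b \<or> c \<le> b" "b \<le> a \<or> b \<le> c"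
    using assms by (auto simp: min_def max_def split: if_splits)
  ultimately show ?thesis
    using bottom_uncovered_le top_uncovered_le left_uncovered_le right_uncovered_le by fastforce
qed

end

lemma covered_if_in_front:
  assumes "strict_total_on {1..n} prec" "i \<in> {1..n}" "j \<in> {1..n}" "prec i j"
    and "p \<in> sq (x j) (y j)"
  shows "covered n x y prec i p"
proof -
  have "j \<noteq> i" "\<not> prec j i"
    using assms(1-4) unfolding strict_total_on_def by blast+
  then show ?thesis
    using assms(3,5) unfolding covered_def by blast
qed

lemma bad_square_if_two_corners_covered:
  assumes "p \<in> corners (x i) (y i)" "q \<in> corners (x i) (y i)" "p \<noteq> q"
    and "covered n x y prec i p" "covered n x y prec i q"
  shows "bad_square n x y prec i"
proof -
  have "card {p, q} \<le> card {c \<in> corners (x i) (y i). covered n x y prec i c}"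
    using assms by (intro card_mono) (auto simp: corners_def)
  then show ?thesis
    using assms(3) by (simp add: bad_square_def)
qed

lemma standard_bad_square_if_vertical_side_covered:
  assumes "\<forall>t\<in>{y i - 1/2 .. y i + 1/2}. covered n x y prec i (x i + s, t)"
    and "s = -1/2 \<or> s = 1/2"
  shows "standard_bad_square n x y prec i"
proof -
  have "bad_square n x y prec i"
    using assms by (intro bad_square_if_two_corners_covered[where p = "(x i + s, y i - 1/2)"
        and q = "(x i + s, y i + 1/2)"]) (auto simp: corners_def)
  with assms show ?thesis
    unfolding standard_bad_square_def by (elim disjE) simp_all
qed

lemma sandwiched_square_if_neighbours_in_front:
  assumes "is_layout w n x prec" "w \<le> 2" "1 < i" "i < n" "prec i (i - 1)" "prec i (i + 1)"
    and "y (i - 1) = y i - e" "y (i + 1) = y i + e" "0 \<le> e" "e \<le> 1/2"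
  shows "sandwiched_square (covered n x y prec i) (x (i - 1)) (x i) (x (i + 1)) (y i) e"
proof -
  have I: "i \<in> {1..n}" "i - 1 \<in> {1..n}" "i + 1 \<in> {1..n}"
    using assms(3,4) by auto
  have x_range: "1/2 \<le> x j \<and> x j \<le> 3/2" if "j \<in> {1..n}" for j
    using assms(1,2) that by (force simp: is_layout_def)
  have "strict_total_on {1..n} prec"
    using assms(1) by (simp add: is_layout_def)
  from covered_if_in_front[OF this I(1)] show ?thesis
    using I assms(5-10) x_range[OF I(1)] x_range[OF I(2)] x_range[OF I(3)]
    by unfold_locales (metis, metis, linarith+)
qed

lemma sq_gap_gt_if_reasonable:
  assumes "reasonable eps n x y prec" "i \<in> {1..n}"
  shows "sq_gap n x y prec i > eps"
proof -
  have "layout_gap n x y prec \<le> sq_gap n x y prec i"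
    unfolding layout_gap_def using assms(2) by (intro Min_le) auto
  then show ?thesis
    using assms(1) by (simp add: reasonable_def)
qed

theorem lemma11:
  fixes w h :: real and k n i :: nat and y x :: "nat \<Rightarrow> real" and prec :: "nat \<Rightarrow> nat \<Rightarrow> bool"
  assumes "1 < w" "w \<le> 2" "h > 1" "k \<ge> 2"
    and "1/2 \<le> y 1" "y n \<le> h - 1/2"
    and "\<forall>j. 1 \<le> j \<and> j < n \<longrightarrow> y (j + 1) - y j = 1 / real k"
    and "is_layout w n x prec"
    and "reasonable (1 / real k) n x y prec"
    and "1 < i" "i < n"
    and "prec i (i - 1)" "prec i (i + 1)"
  shows "standard_bad_square n x y prec i"
proof -
  define e where "e = 1 / real k"
  have "1 \<le> i - 1 \<and> i - 1 < n" "1 \<le> i \<and> i < n" "i - 1 + 1 = i"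
    using assms(10,11) by auto
  then have "y (i - 1) = y i - e" "y (i + 1) = y i + e"
    using assms(7)[rule_format, of "i - 1"] assms(7)[rule_format, of i] by (simp_all add: e_def)
  moreover have "0 \<le> e" "e \<le> 1/2"
    using assms(4) by (auto simp: e_def field_simps)
  ultimately interpret sandwiched_square "covered n x y prec i" "x (i - 1)" "x i" "x (i + 1)" "y i" e
    using assms(2,8,10-13) by (intro sandwiched_square_if_neighbours_in_front)
  consider "max (x (i - 1)) (x (i + 1)) \<le> x i" | "x i \<le> min (x (i - 1)) (x (i + 1))"
    | "min (x (i - 1)) (x (i + 1)) \<le> x i" "x i \<le> max (x (i - 1)) (x (i + 1))" by linarith
  then show ?thesis
  proof cases
    case 1
    then show ?thesis
      using left_side_covered by (intro standard_bad_square_if_vertical_side_covered[where s = "-1/2"]) auto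
  next
    case 2
    then show ?thesis
      using right_side_covered by (intro standard_bad_square_if_vertical_side_covered[where s = "1/2"]) auto
  next
    case 3
    have "i \<in> {1..n}"
      using assms(10,11) by simp
    from visible_perimeter_le_of_between[OF 3] e_le sq_gap_gt_if_reasonable[OF assms(9) this]
    have False by (simp add: sq_gap_def vis_perim_def e_def)
    then show ?thesis ..
  qed
qed

end
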